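(* Fix $r\in(0,|\xi|_c)$ and let $\alpha(s)=\alpha(r;s)$ for $s>0$. Then: (1) $\alpha\in C^{0,1}_{loc}((0,\infty))\cap C^0((0,\infty))$ and $\alpha$ is strictly increasing in $s$; (2) there exist constants $C_0,C_1,C_2>0$ depending on $\rho_\pm,\mu_\pm,\sigma_\pm,b,g,r$ such that for all $s>0$ $$\alpha(s)\le-C_0+sC_1\quad\text{and}\quad\alpha(s)\ge-\frac{2g(\rho_+-\rho_-)}{\rho_-}r+sC_2.$$
   Context: Fix $b,g>0$, $\rho_+>\rho_->0$, $\mu_\pm>0$, $\sigma_\pm\ge0$ (either both zero or both positive); $[\![\rho]\!]=\rho_+-\rho_-$. Let $\rho(x_3),\mu(x_3)$ equal $\rho_+,\mu_+$ on $(0,1)$ and $\rho_-,\mu_-$ on $(-b,0)$. $X=\{\psi\in H^2((-b,1)):\psi(-b)=\psi'(-b)=0\}$. For $r>0,s>0$: $E(\psi;r,s)=\frac12\int_{-b}^1s\mu(4r^2|\psi'|^2+|r^2\psi+\psi''|^2)dx_3+\frac12r^2(\sigma_+r^2+g\rho_+)|\psi(1)|^2+\frac12r^2(\sigma_-r^2-g[\![\rho]\!])|\psi(0)|^2$, $J(\psi;r)=\frac12\int_{-b}^1\rho(r^2|\psi|^2+|\psi'|^2)dx_3$, $\alpha(r;s)=\inf\{E(\psi;r,s):\psi\in X,\ J(\psi;r)=1\}$. $|\xi|_c=\sqrt{g[\![\rho]\!]/\sigma_-}$ if $\sigma_->0$, $|\xi|_c=\infty$ if $\sigma_-=0$. 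*)

theory Defs
  imports "HOL-Analysis.Analysis"
begin

text \<open>Piecewise coefficients: upper fluid on (0,1), lower fluid on (-b,0).
  The value at the single point 0 is irrelevant (measure zero).\<close>
definition pw :: "real \<Rightarrow> real \<Rightarrow> real \<Rightarrow> real" where
  "pw vp vm x = (if x > 0 then vp else vm)"

text \<open>H^2 on the bounded interval [a,c], via its continuous representative:
  psi is differentiable on [a,c] with derivative psi1, psi1 is absolutely continuous
  with weak derivative psi2 (psi1 x = psi1 a + integral of psi2 over [a,x]),
  and psi2 is square integrable.\<close>
definition H2_triple :: "real \<Rightarrow> real \<Rightarrow> (real \<Rightarrow> real) \<Rightarrow> (real \<Rightarrow> real) \<Rightarrow> (real \<Rightarrow> real) \<Rightarrow> bool" where
  "H2_triple a c psi psi1 psi2 \<longleftrightarrow>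
     (\<forall>x\<in>{a..c}. (psi has_real_derivative psi1 x) (at x within {a..c})) \<and>
     set_integrable lborel {a..c} psi2 \<and>
     set_integrable lborel {a..c} (\<lambda>x. (psi2 x)\<^sup>2) \<and>
     (\<forall>x\<in>{a..c}. psi1 x = psi1 a + (LINT t:{a..x}|lborel. psi2 t))"

definition in_X :: "real \<Rightarrow> (real \<Rightarrow> real) \<Rightarrow> (real \<Rightarrow> real) \<Rightarrow> (real \<Rightarrow> real) \<Rightarrow> bool" where
  "in_X b psi psi1 psi2 \<longleftrightarrow> H2_triple (-b) 1 psi psi1 psi2 \<and> psi (-b) = 0 \<and> psi1 (-b) = 0"

definition energyE ::
  "real \<Rightarrow> real \<Rightarrow> real \<Rightarrow> real \<Rightarrow> real \<Rightarrow> real \<Rightarrow> real \<Rightarrow> real \<Rightarrow>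
   (real \<Rightarrow> real) \<Rightarrow> (real \<Rightarrow> real) \<Rightarrow> (real \<Rightarrow> real) \<Rightarrow> real \<Rightarrow> real \<Rightarrow> real" where
  "energyE b g rhop rhom mup mum sigp sigm psi psi1 psi2 r s =
     1/2 * (LINT x:{-b..1}|lborel. s * pw mup mum x * (4 * r\<^sup>2 * (psi1 x)\<^sup>2 + (r\<^sup>2 * psi x + psi2 x)\<^sup>2))
     + 1/2 * r\<^sup>2 * (sigp * r\<^sup>2 + g * rhop) * (psi 1)\<^sup>2
     + 1/2 * r\<^sup>2 * (sigm * r\<^sup>2 - g * (rhop - rhom)) * (psi 0)\<^sup>2"

definition functJ ::
  "real \<Rightarrow> real \<Rightarrow> real \<Rightarrow> (real \<Rightarrow> real) \<Rightarrow> (real \<Rightarrow> real) \<Rightarrow> real \<Rightarrow> real" where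
  "functJ b rhop rhom psi psi1 r =
     1/2 * (LINT x:{-b..1}|lborel. pw rhop rhom x * (r\<^sup>2 * (psi x)\<^sup>2 + (psi1 x)\<^sup>2))"

definition alpha ::
  "real \<Rightarrow> real \<Rightarrow> real \<Rightarrow> real \<Rightarrow> real \<Rightarrow> real \<Rightarrow> real \<Rightarrow> real \<Rightarrow> real \<Rightarrow> real \<Rightarrow> real" where
  "alpha b g rhop rhom mup mum sigp sigm r s =
     Inf {energyE b g rhop rhom mup mum sigp sigm psi psi1 psi2 r s | psi psi1 psi2.
            in_X b psi psi1 psi2 \<and> functJ b rhop rhom psi psi1 r = 1}"

definition xi_crit :: "real \<Rightarrow> real \<Rightarrow> real \<Rightarrow> real \<Rightarrow> ereal" where
  "xi_crit g rhop rhom sigm =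
     (if sigm > 0 then ereal (sqrt (g * (rhop - rhom) / sigm)) else \<infinity>)"

end

theory Submission
  imports Defs
begin

text \<open>
  For fixed \<open>r\<close> the energy splits as \<open>E(\<psi>; r, s) = s A(\<psi>) + N(\<psi>)\<close>, where the viscous
  part \<open>A\<close> does not depend on \<open>s\<close>. Hence \<open>\<alpha>(r; \<cdot>)\<close> is the lower envelope of a family of
  affine functions of \<open>s\<close>. On the constraint set \<open>J(\<psi>; r) = 1\<close> the slopes are bounded below
  by a positive constant (Poincare inequality, using \<open>\<psi>(-b) = 0\<close>), and the intercepts are
  bounded below because the only negative term, the one with \<open>\<psi>(0)\<^sup>2\<close>, is controlled by a
  trace inequality. Any such envelope is strictly increasing, locally Lipschitz and lies
  above a line of positive slope. Below the critical wavenumber a cubic profile with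
  \<open>\<psi>(1) = 0 \<noteq> \<psi>(0)\<close> has negative intercept, which gives the upper line.
\<close>

subsection \<open>Lower envelopes of affine functions\<close>

definition lower_envelope :: "'a set \<Rightarrow> ('a \<Rightarrow> real) \<Rightarrow> ('a \<Rightarrow> real) \<Rightarrow> real \<Rightarrow> real" where
  "lower_envelope I A N s = Inf ((\<lambda>i. s * A i + N i) ` I)"

locale affine_family =
  fixes I :: "'a set" and A N :: "'a \<Rightarrow> real" and c K :: real
  assumes nonempty: "I \<noteq> {}"
    and slope_ge: "\<And>i. i \<in> I \<Longrightarrow> c \<le> A i"
    and intercept_ge: "\<And>i. i \<in> I \<Longrightarrow> - K \<le> N i"
    and slope_pos: "0 < c"
begin

lemma affine_ge:
  assumes "0 \<le> s" "i \<in> I"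
  shows "- K + s * c \<le> s * A i + N i"
  using mult_left_mono[OF slope_ge[OF assms(2)] assms(1)] intercept_ge[OF assms(2)] by linarith

lemma lower_envelope_greatest:
  assumes "\<And>i. i \<in> I \<Longrightarrow> y \<le> s * A i + N i"
  shows "y \<le> lower_envelope I A N s"
  unfolding lower_envelope_def using nonempty assms by (auto intro!: cInf_greatest)

lemma lower_envelope_ge: "0 \<le> s \<Longrightarrow> - K + s * c \<le> lower_envelope I A N s"
  by (rule lower_envelope_greatest) (rule affine_ge)

lemma lower_envelope_le:
  assumes "0 \<le> s" "i \<in> I"
  shows "lower_envelope I A N s \<le> s * A i + N i"
  unfolding lower_envelope_def
  using assms affine_ge[OF assms(1)] by (auto intro!: cInf_lower bdd_belowI2)

lemma lower_envelope_increment: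
  assumes "0 \<le> s" "s \<le> t"
  shows "lower_envelope I A N s + (t - s) * c \<le> lower_envelope I A N t"
proof (rule lower_envelope_greatest)
  fix i assume i: "i \<in> I"
  have "lower_envelope I A N s \<le> s * A i + N i" by (rule lower_envelope_le[OF assms(1) i])
  moreover have "(t - s) * c \<le> (t - s) * A i" using assms slope_ge[OF i] by (intro mult_left_mono) auto
  ultimately show "lower_envelope I A N s + (t - s) * c \<le> t * A i + N i"
    by (simp add: algebra_simps)
qed

lemma strict_mono_on_lower_envelope: "strict_mono_on {0..} (lower_envelope I A N)"
proof (rule strict_mono_onI)
  fix s t :: real assume "s \<in> {0..}" "s < t"
  then show "lower_envelope I A N s < lower_envelope I A N t"
    using lower_envelope_increment[of s t] slope_pos by (smt (verit) atLeast_iff mult_pos_pos)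
qed

text \<open>From \<open>s (t A + N) = t (s A + N) - (t - s) N\<close> and \<open>N \<ge> -K\<close>: the lower bound on the
  intercepts limits how fast the envelope can grow, which gives the local Lipschitz bound.\<close>
lemma lower_envelope_growth:
  assumes "0 < s" "s \<le> t"
  shows "s * lower_envelope I A N t \<le> t * lower_envelope I A N s + (t - s) * K"
proof -
  have "(s * lower_envelope I A N t - (t - s) * K) / t \<le> lower_envelope I A N s"
  proof (rule lower_envelope_greatest)
    fix i assume i: "i \<in> I"
    have "s * lower_envelope I A N t \<le> s * (t * A i + N i)"
      using assms lower_envelope_le[of t i] i by (intro mult_left_mono) auto
    also have "\<dots> = t * (s * A i + N i) + (t - s) * (- N i)" by (simp add: algebra_simps)
    also have "\<dots> \<le> t * (s * A i + N i) + (t - s) * K"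
      using assms intercept_ge[OF i] by (intro add_left_mono mult_left_mono) auto
    finally show "(s * lower_envelope I A N t - (t - s) * K) / t \<le> s * A i + N i"
      using assms by (simp add: pos_divide_le_eq algebra_simps)
  qed
  then show ?thesis using assms by (simp add: pos_divide_le_eq algebra_simps)
qed

lemma lipschitz_on_lower_envelope:
  assumes "0 < a" "a \<le> d"
  shows "((lower_envelope I A N d + K) / a)-lipschitz_on {a..d} (lower_envelope I A N)"
proof -
  let ?F = "lower_envelope I A N"
  have step: "\<bar>?F y - ?F x\<bar> \<le> (?F d + K) / a * (y - x)" if "x \<in> {a..d}" "y \<in> {a..d}" "x \<le> y" for x y
  proof -
    have x: "0 < x" "a \<le> x" "x \<le> d" using that assms by auto
    have incr: "0 \<le> ?F y - ?F x"
      using lower_envelope_increment[of x y] that x slope_pos by (smt (verit) mult_nonneg_nonneg)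
    have "a * (?F y - ?F x) \<le> x * (?F y - ?F x)" using x incr by (intro mult_right_mono)
    also have "\<dots> \<le> (y - x) * (?F x + K)"
      using lower_envelope_growth[of x y] x that by (simp add: algebra_simps)
    also have "\<dots> \<le> (y - x) * (?F d + K)"
      using lower_envelope_increment[of x d] x that slope_pos
      by (intro mult_left_mono) (auto intro: order_trans[rotated] simp: mult_nonneg_nonneg)
    finally show ?thesis using incr assms by (simp add: pos_le_divide_eq mult.commute)
  qed
  show ?thesis
  proof (rule lipschitz_onI)
    have "0 \<le> ?F d + K" using lower_envelope_ge[of d] assms mult_pos_pos[OF _ slope_pos, of d] by simp
    then show "0 \<le> (?F d + K) / a" using assms by simp
  next
    fix x y assume "x \<in> {a..d}" "y \<in> {a..d}"
    then show "dist (?F x) (?F y) \<le> (?F d + K) / a * dist x y"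
      using step[of x y] step[of y x]
      by (cases "x \<le> y") (auto simp: dist_real_def abs_minus_commute)
  qed
qed

lemma continuous_on_lower_envelope: "continuous_on {0<..} (lower_envelope I A N)"
proof (intro continuous_at_imp_continuous_on ballI)
  fix x :: real assume "x \<in> {0<..}"
  then have "continuous_on {x/2..x+1} (lower_envelope I A N)" "x \<in> interior {x/2..x+1}"
    using lipschitz_on_lower_envelope[of "x/2" "x+1"] by (auto intro: lipschitz_on_continuous_on)
  then show "isCont (lower_envelope I A N) x" by (rule continuous_on_interior)
qed

end

subsection \<open>Poincare and trace inequalities\<close>

lemma set_integral_FTC_real:
  fixes F f :: "real \<Rightarrow> real"
  assumes "a \<le> c" "\<And>x. x \<in> {a..c} \<Longrightarrow> (F has_real_derivative f x) (at x within {a..c})"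
    and "continuous_on {a..c} f"
  shows "(LINT x:{a..c}|lborel. f x) = F c - F a"
  unfolding set_lebesgue_integral_def using assms
  by (intro integral_FTC_atLeastAtMost) (auto simp: has_real_derivative_iff_has_vector_derivative)

lemma poincare_inequality:
  fixes psi psi1 :: "real \<Rightarrow> real"
  assumes "a \<le> c"
    and deriv: "\<And>x. x \<in> {a..c} \<Longrightarrow> (psi has_real_derivative psi1 x) (at x within {a..c})"
    and cont: "continuous_on {a..c} psi1" and "psi a = 0"
  shows "(LINT x:{a..c}|lborel. (psi x)\<^sup>2) \<le> 4 * (c - a)\<^sup>2 * (LINT x:{a..c}|lborel. (psi1 x)\<^sup>2)"
proof -
  have cont0: "continuous_on {a..c} psi" using deriv by (rule DERIV_continuous_on)
  define f where "f x = (psi x)\<^sup>2 + 2 * (x - c) * psi x * psi1 x" for x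
  define h where "h x = (psi x)\<^sup>2 / 2 - 2 * (c - a)\<^sup>2 * (psi1 x)\<^sup>2" for x
  have "(LINT x:{a..c}|lborel. f x) = (c - c) * (psi c)\<^sup>2 - (a - c) * (psi a)\<^sup>2"
  proof (rule set_integral_FTC_real[OF \<open>a \<le> c\<close> _ ])
    show "continuous_on {a..c} f" unfolding f_def using cont0 cont by (intro continuous_intros)
    fix x assume x: "x \<in> {a..c}"
    show "((\<lambda>x. (x - c) * (psi x)\<^sup>2) has_real_derivative f x) (at x within {a..c})"
      unfolding f_def
      by (rule derivative_eq_intros deriv[OF x] refl)+ (simp add: algebra_simps power2_eq_square)
  qed
  then have f0: "(LINT x:{a..c}|lborel. f x) = 0" using \<open>psi a = 0\<close> by simp
  text \<open>\<open>h \<le> f\<close> pointwise since \<open>(\<psi> + 2(x - c)\<psi>')\<^sup>2 \<ge> 0\<close> and \<open>(x - c)\<^sup>2 \<le> (c - a)\<^sup>2\<close>.\<close>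
  have "(LINT x:{a..c}|lborel. h x) \<le> (LINT x:{a..c}|lborel. f x)"
  proof (rule set_integral_mono)
    show "set_integrable lborel {a..c} h" "set_integrable lborel {a..c} f"
      unfolding h_def f_def using cont0 cont
      by (auto intro!: borel_integrable_atLeastAtMost' continuous_intros)
    fix x assume x: "x \<in> {a..c}"
    have "(x - c)\<^sup>2 \<le> (c - a)\<^sup>2" using x by (simp add: power2_commute[of x] power_mono)
    then have "(x - c)\<^sup>2 * (psi1 x)\<^sup>2 \<le> (c - a)\<^sup>2 * (psi1 x)\<^sup>2" by (rule mult_right_mono) simp
    moreover have "0 \<le> (psi x + 2 * (x - c) * psi1 x)\<^sup>2" by simp
    ultimately show "h x \<le> f x" unfolding h_def f_def by (simp add: power2_eq_square algebra_simps)
  qed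
  moreover have "(LINT x:{a..c}|lborel. h x)
      = (LINT x:{a..c}|lborel. (psi x)\<^sup>2) / 2 - 2 * (c - a)\<^sup>2 * (LINT x:{a..c}|lborel. (psi1 x)\<^sup>2)"
    unfolding h_def using cont0 cont
    by (subst set_integral_diff(2)) (auto intro!: borel_integrable_atLeastAtMost' continuous_intros)
  ultimately show ?thesis using f0 by linarith
qed

lemma trace_inequality:
  fixes psi psi1 :: "real \<Rightarrow> real"
  assumes "a \<le> x0" "x0 \<le> c" "0 < r"
    and deriv: "\<And>x. x \<in> {a..c} \<Longrightarrow> (psi has_real_derivative psi1 x) (at x within {a..c})"
    and cont: "continuous_on {a..c} psi1" and "psi a = 0"
  shows "r * (psi x0)\<^sup>2 \<le> (LINT x:{a..c}|lborel. r\<^sup>2 * (psi x)\<^sup>2 + (psi1 x)\<^sup>2)"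
proof -
  have cont0: "continuous_on {a..c} psi" using deriv by (rule DERIV_continuous_on)
  have sub: "{a..x0} \<subseteq> {a..c}" using assms by auto
  define G where "G x = r\<^sup>2 * (psi x)\<^sup>2 + (psi1 x)\<^sup>2" for x
  have int_G: "set_integrable lborel {a..c} G"
    unfolding G_def using cont0 cont by (intro borel_integrable_atLeastAtMost' continuous_intros)
  have "(LINT x:{a..x0}|lborel. 2 * r * psi x * psi1 x) = r * (psi x0)\<^sup>2 - r * (psi a)\<^sup>2"
  proof (rule set_integral_FTC_real[OF \<open>a \<le> x0\<close>])
    show "continuous_on {a..x0} (\<lambda>x. 2 * r * psi x * psi1 x)"
      using cont0 cont by (intro continuous_intros continuous_on_subset[OF _ sub])
    fix x assume x: "x \<in> {a..x0}"
    have d: "(psi has_real_derivative psi1 x) (at x within {a..x0})"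
      using x sub by (intro has_field_derivative_subset[OF deriv]) auto
    show "((\<lambda>x. r * (psi x)\<^sup>2) has_real_derivative 2 * r * psi x * psi1 x) (at x within {a..x0})"
      by (rule derivative_eq_intros d refl)+ (simp add: algebra_simps power2_eq_square)
  qed
  then have "r * (psi x0)\<^sup>2 = (LINT x:{a..x0}|lborel. 2 * r * psi x * psi1 x)" using \<open>psi a = 0\<close> by simp
  also have "\<dots> \<le> (LINT x:{a..x0}|lborel. G x)"
  proof (rule set_integral_mono)
    show "set_integrable lborel {a..x0} (\<lambda>x. 2 * r * psi x * psi1 x)"
      using cont0 cont
      by (intro borel_integrable_atLeastAtMost' continuous_intros continuous_on_subset[OF _ sub])
    show "set_integrable lborel {a..x0} G" by (rule set_integrable_subset[OF int_G]) (use sub in auto)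
    show "2 * r * psi x * psi1 x \<le> G x" for x
      using sum_squares_bound[of "r * psi x" "psi1 x"] unfolding G_def by (simp add: power_mult_distrib)
  qed
  also have "\<dots> \<le> (LINT x:{a..c}|lborel. G x)"
  proof -
    have split: "{a..c} = {a..x0} \<union> {x0<..c}" using assms by auto
    have "0 \<le> (LINT x:{x0<..c}|lborel. G x)"
      unfolding set_lebesgue_integral_def G_def by (auto intro!: Bochner_Integration.integral_nonneg)
    moreover have "(LINT x:{a..c}|lborel. G x) = (LINT x:{a..x0}|lborel. G x) + (LINT x:{x0<..c}|lborel. G x)"
      unfolding split using int_G split
      by (intro set_integral_Un) (auto intro: set_integrable_subset)
    ultimately show ?thesis by simp
  qed
  finally show ?thesis unfolding G_def .
qed

lemma pw_bounds: "min vp vm \<le> pw vp vm x" "pw vp vm x \<le> max vp vm"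
  by (auto simp: pw_def)

lemma borel_measurable_pw [measurable]: "pw vp vm \<in> borel_measurable borel"
  unfolding pw_def by measurable

lemma set_integrable_pw_mult:
  fixes G :: "real \<Rightarrow> real"
  assumes "set_integrable lborel S G"
  shows "set_integrable lborel S (\<lambda>x. pw vp vm x * G x)"
proof (rule set_integrable_bound)
  show "set_integrable lborel S (\<lambda>x. (\<bar>vp\<bar> + \<bar>vm\<bar>) * G x)" using assms by simp
  have "(\<lambda>x. pw vp vm x * (indicator S x * G x)) \<in> borel_measurable lborel"
    using borel_measurable_integrable[OF assms[unfolded set_integrable_def]] by simp
  then show "set_borel_measurable lborel S (\<lambda>x. pw vp vm x * G x)"
    unfolding set_borel_measurable_def by (simp add: ac_simps)
  show "AE x in lborel. x \<in> S \<longrightarrow> norm (pw vp vm x * G x) \<le> norm ((\<bar>vp\<bar> + \<bar>vm\<bar>) * G x)"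
    by (auto simp: pw_def abs_mult intro!: mult_right_mono)
qed

lemma H2_triple_deriv:
  "H2_triple a c psi psi1 psi2 \<Longrightarrow> x \<in> {a..c} \<Longrightarrow> (psi has_real_derivative psi1 x) (at x within {a..c})"
  unfolding H2_triple_def by blast

lemma H2_triple_continuous_on: "H2_triple a c psi psi1 psi2 \<Longrightarrow> continuous_on {a..c} psi"
  by (rule DERIV_continuous_on) (rule H2_triple_deriv)

lemma H2_triple_continuous_on_deriv:
  assumes "H2_triple a c psi psi1 psi2"
  shows "continuous_on {a..c} psi1"
proof -
  have int: "set_integrable lborel {a..c} psi2"
    and eq: "\<And>x. x \<in> {a..c} \<Longrightarrow> psi1 x = psi1 a + (LINT t:{a..x}|lborel. psi2 t)"
    using assms unfolding H2_triple_def by blast+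
  have "continuous_on {a..c} (\<lambda>x. psi1 a + integral {a..x} psi2)"
    by (intro continuous_intros indefinite_integral_continuous_1 set_borel_integral_eq_integral(1)[OF int])
  then show ?thesis
  proof (rule continuous_on_eq)
    fix x assume x: "x \<in> {a..c}"
    have "set_integrable lborel {a..x} psi2" by (rule set_integrable_subset[OF int]) (use x in auto)
    then show "psi1 a + integral {a..x} psi2 = psi1 x"
      using eq[OF x] by (simp add: set_borel_integral_eq_integral(2))
  qed
qed

lemma H2_triple_measurable:
  assumes "H2_triple a c psi psi1 psi2"
  shows "psi2 \<in> borel_measurable (restrict_space borel {a..c})"
proof -
  have "set_integrable lborel {a..c} psi2" using assms unfolding H2_triple_def by blast
  then show ?thesis unfolding set_integrable_def
    by (subst borel_measurable_restrict_space_iff) (auto dest: borel_measurable_integrable)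
qed

lemma H2_triple_set_integrable_viscous:
  assumes H: "H2_triple a c psi psi1 psi2"
  shows "set_integrable lborel {a..c} (\<lambda>x. pw vp vm x * (4 * r\<^sup>2 * (psi1 x)\<^sup>2 + (r\<^sup>2 * psi x + psi2 x)\<^sup>2))"
proof (rule set_integrable_pw_mult, rule set_integrable_bound)
  note cont = H2_triple_continuous_on[OF H] H2_triple_continuous_on_deriv[OF H]
  have "set_integrable lborel {a..c} (\<lambda>x. (psi2 x)\<^sup>2)"
    using H unfolding H2_triple_def by blast
  then have "set_integrable lborel {a..c} (\<lambda>x. 2 * (psi2 x)\<^sup>2)"
    by (rule set_integrable_mult_right)
  moreover have "set_integrable lborel {a..c} (\<lambda>x. 4 * r\<^sup>2 * (psi1 x)\<^sup>2 + 2 * (r\<^sup>2 * psi x)\<^sup>2)"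
    using cont by (intro borel_integrable_atLeastAtMost' continuous_intros)
  ultimately show "set_integrable lborel {a..c}
      (\<lambda>x. 4 * r\<^sup>2 * (psi1 x)\<^sup>2 + 2 * (r\<^sup>2 * psi x)\<^sup>2 + 2 * (psi2 x)\<^sup>2)"
    by (rule set_integral_add(1)[rotated])
  have [measurable]: "psi \<in> borel_measurable (restrict_space borel {a..c})"
    "psi1 \<in> borel_measurable (restrict_space borel {a..c})"
    "psi2 \<in> borel_measurable (restrict_space borel {a..c})"
    using cont H2_triple_measurable[OF H] by (auto intro: borel_measurable_continuous_on_restrict)
  have "(\<lambda>x. 4 * r\<^sup>2 * (psi1 x)\<^sup>2 + (r\<^sup>2 * psi x + psi2 x)\<^sup>2) \<in> borel_measurable (restrict_space borel {a..c})"
    by measurable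
  then show "set_borel_measurable lborel {a..c} (\<lambda>x. 4 * r\<^sup>2 * (psi1 x)\<^sup>2 + (r\<^sup>2 * psi x + psi2 x)\<^sup>2)"
    unfolding set_borel_measurable_def by (subst (asm) borel_measurable_restrict_space_iff) auto
  have "(u + v)\<^sup>2 \<le> 2 * u\<^sup>2 + 2 * v\<^sup>2" for u v :: real
    using sum_squares_bound[of u v] by (simp add: power2_sum)
  then have "\<bar>4 * r\<^sup>2 * (psi1 x)\<^sup>2 + (r\<^sup>2 * psi x + psi2 x)\<^sup>2\<bar>
      \<le> \<bar>4 * r\<^sup>2 * (psi1 x)\<^sup>2 + 2 * (r\<^sup>2 * psi x)\<^sup>2 + 2 * (psi2 x)\<^sup>2\<bar>" for x
    by (simp add: add_mono)
  then show "AE x in lborel. x \<in> {a..c} \<longrightarrow>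
      norm (4 * r\<^sup>2 * (psi1 x)\<^sup>2 + (r\<^sup>2 * psi x + psi2 x)\<^sup>2)
        \<le> norm (4 * r\<^sup>2 * (psi1 x)\<^sup>2 + 2 * (r\<^sup>2 * psi x)\<^sup>2 + 2 * (psi2 x)\<^sup>2)"
    by simp
qed

lemma in_X_H2_triple: "in_X b psi psi1 psi2 \<Longrightarrow> H2_triple (-b) 1 psi psi1 psi2"
  and in_X_bottom: "in_X b psi psi1 psi2 \<Longrightarrow> psi (-b) = 0"
  unfolding in_X_def by blast+

lemma cubic_in_X:
  assumes "0 < b"
  shows "in_X b (\<lambda>x. l * ((x + b)\<^sup>2 * (1 - x))) (\<lambda>x. l * (2 * (x + b) * (1 - x) - (x + b)\<^sup>2))
    (\<lambda>x. l * (2 * (1 - x) - 4 * (x + b)))"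
proof -
  have deriv: "((\<lambda>x. l * ((x + b)\<^sup>2 * (1 - x))) has_real_derivative l * (2 * (x + b) * (1 - x) - (x + b)\<^sup>2))
      (at x within S)" for x S
    by (rule derivative_eq_intros refl)+ (simp add: algebra_simps power2_eq_square)
  have deriv1: "((\<lambda>x. l * (2 * (x + b) * (1 - x) - (x + b)\<^sup>2)) has_real_derivative l * (2 * (1 - x) - 4 * (x + b)))
      (at x within S)" for x S
    by (rule derivative_eq_intros refl)+ (simp add: algebra_simps power2_eq_square)
  have ftc: "l * (2 * (x + b) * (1 - x) - (x + b)\<^sup>2)
      = l * (2 * (-b + b) * (1 - -b) - (-b + b)\<^sup>2) + (LINT t:{-b..x}|lborel. l * (2 * (1 - t) - 4 * (t + b)))"
    if "x \<in> {-b..1}" for x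
    using that by (subst set_integral_FTC_real[OF _ deriv1]) (auto intro!: continuous_intros)
  show ?thesis
    unfolding in_X_def H2_triple_def
    using deriv ftc by (auto intro!: borel_integrable_atLeastAtMost' continuous_intros)
qed

subsection \<open>The energy as an affine function of \<open>s\<close>\<close>

definition viscous_energy ::
  "real \<Rightarrow> real \<Rightarrow> real \<Rightarrow> (real \<Rightarrow> real) \<Rightarrow> (real \<Rightarrow> real) \<Rightarrow> (real \<Rightarrow> real) \<Rightarrow> real \<Rightarrow> real" where
  "viscous_energy b mup mum psi psi1 psi2 r =
     1/2 * (LINT x:{-b..1}|lborel. pw mup mum x * (4 * r\<^sup>2 * (psi1 x)\<^sup>2 + (r\<^sup>2 * psi x + psi2 x)\<^sup>2))"

definition surface_energy ::
  "real \<Rightarrow> real \<Rightarrow> real \<Rightarrow> real \<Rightarrow> real \<Rightarrow> (real \<Rightarrow> real) \<Rightarrow> real \<Rightarrow> real" where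
  "surface_energy g rhop rhom sigp sigm psi r =
     1/2 * r\<^sup>2 * (sigp * r\<^sup>2 + g * rhop) * (psi 1)\<^sup>2
     + 1/2 * r\<^sup>2 * (sigm * r\<^sup>2 - g * (rhop - rhom)) * (psi 0)\<^sup>2"

definition admissible ::
  "real \<Rightarrow> real \<Rightarrow> real \<Rightarrow> real \<Rightarrow> ((real \<Rightarrow> real) \<times> (real \<Rightarrow> real) \<times> (real \<Rightarrow> real)) set" where
  "admissible b rhop rhom r =
     {(psi, psi1, psi2). in_X b psi psi1 psi2 \<and> functJ b rhop rhom psi psi1 r = 1}"

lemma energyE_eq:
  "energyE b g rhop rhom mup mum sigp sigm psi psi1 psi2 r s
     = s * viscous_energy b mup mum psi psi1 psi2 r + surface_energy g rhop rhom sigp sigm psi r"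
  unfolding energyE_def viscous_energy_def surface_energy_def by (simp add: mult.assoc)

lemma alpha_eq_lower_envelope:
  "alpha b g rhop rhom mup mum sigp sigm r =
     lower_envelope (admissible b rhop rhom r)
       (\<lambda>(psi, psi1, psi2). viscous_energy b mup mum psi psi1 psi2 r)
       (\<lambda>(psi, psi1, psi2). surface_energy g rhop rhom sigp sigm psi r)"
  unfolding alpha_def lower_envelope_def admissible_def energyE_eq
  by (intro ext arg_cong[where f = Inf]) (auto simp: image_def)

subsection \<open>Bounds on the admissible set\<close>

lemma functJ_ge_trace:
  assumes X: "in_X b psi psi1 psi2" and "0 < b" "0 < r" "0 < rhom" "rhom \<le> rhop"
  shows "r * rhom * (psi 0)\<^sup>2 \<le> 2 * functJ b rhop rhom psi psi1 r"
proof -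
  note H = in_X_H2_triple[OF X]
  define G where "G x = r\<^sup>2 * (psi x)\<^sup>2 + (psi1 x)\<^sup>2" for x
  have int_G: "set_integrable lborel {-b..1} G"
    unfolding G_def using H2_triple_continuous_on[OF H] H2_triple_continuous_on_deriv[OF H]
    by (intro borel_integrable_atLeastAtMost' continuous_intros)
  have "r * (psi 0)\<^sup>2 \<le> (LINT x:{-b..1}|lborel. G x)"
    unfolding G_def using assms H2_triple_deriv[OF H]
    by (intro trace_inequality H2_triple_continuous_on_deriv[OF H] in_X_bottom[OF X]) auto
  then have "r * rhom * (psi 0)\<^sup>2 \<le> (LINT x:{-b..1}|lborel. rhom * G x)"
    using mult_left_mono[of _ _ rhom] assms by (simp add: ac_simps)
  also have "\<dots> \<le> (LINT x:{-b..1}|lborel. pw rhop rhom x * G x)"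
  proof (rule set_integral_mono)
    show "set_integrable lborel {-b..1} (\<lambda>x. rhom * G x)"
      "set_integrable lborel {-b..1} (\<lambda>x. pw rhop rhom x * G x)"
      using int_G by (auto intro: set_integrable_pw_mult)
    show "rhom * G x \<le> pw rhop rhom x * G x" for x
      using pw_bounds(1)[of rhop rhom x] assms by (intro mult_right_mono) (auto simp: G_def)
  qed
  also have "\<dots> = 2 * functJ b rhop rhom psi psi1 r"
    unfolding functJ_def G_def by simp
  finally show ?thesis .
qed

lemma functJ_le_dirichlet:
  assumes X: "in_X b psi psi1 psi2" and "0 < b" "0 < rhom" "rhom \<le> rhop"
  shows "2 * functJ b rhop rhom psi psi1 r
    \<le> rhop * (4 * r\<^sup>2 * (1 + b)\<^sup>2 + 1) * (LINT x:{-b..1}|lborel. (psi1 x)\<^sup>2)"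
proof -
  note H = in_X_H2_triple[OF X]
  note cont = H2_triple_continuous_on[OF H] H2_triple_continuous_on_deriv[OF H]
  have int0: "set_integrable lborel {-b..1} (\<lambda>x. r\<^sup>2 * (psi x)\<^sup>2)"
    and int1: "set_integrable lborel {-b..1} (\<lambda>x. (psi1 x)\<^sup>2)"
    using cont by (auto intro!: borel_integrable_atLeastAtMost' continuous_intros)
  have "2 * functJ b rhop rhom psi psi1 r
      = (LINT x:{-b..1}|lborel. pw rhop rhom x * (r\<^sup>2 * (psi x)\<^sup>2 + (psi1 x)\<^sup>2))"
    unfolding functJ_def by simp
  also have "\<dots> \<le> (LINT x:{-b..1}|lborel. rhop * (r\<^sup>2 * (psi x)\<^sup>2 + (psi1 x)\<^sup>2))"
    using set_integral_add(1)[OF int0 int1] pw_bounds(2)[of rhop rhom] assms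
    by (intro set_integral_mono set_integrable_pw_mult) (auto intro!: mult_right_mono)
  also have "\<dots> = rhop * (r\<^sup>2 * (LINT x:{-b..1}|lborel. (psi x)\<^sup>2) + (LINT x:{-b..1}|lborel. (psi1 x)\<^sup>2))"
    by (simp add: set_integral_add(2)[OF int0 int1])
  also have "\<dots> \<le> rhop * (r\<^sup>2 * (4 * (1 + b)\<^sup>2 * (LINT x:{-b..1}|lborel. (psi1 x)\<^sup>2))
      + (LINT x:{-b..1}|lborel. (psi1 x)\<^sup>2))"
    using poincare_inequality[of "-b" 1 psi psi1] H2_triple_deriv[OF H] cont in_X_bottom[OF X] assms
    by (intro mult_left_mono add_right_mono) auto
  finally show ?thesis by (simp add: algebra_simps)
qed

lemma viscous_energy_ge_dirichlet:
  assumes X: "in_X b psi psi1 psi2" and "0 < mup" "0 < mum"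
  shows "2 * min mup mum * r\<^sup>2 * (LINT x:{-b..1}|lborel. (psi1 x)\<^sup>2) \<le> viscous_energy b mup mum psi psi1 psi2 r"
proof -
  note H = in_X_H2_triple[OF X]
  have "(LINT x:{-b..1}|lborel. min mup mum * (4 * r\<^sup>2 * (psi1 x)\<^sup>2))
      \<le> (LINT x:{-b..1}|lborel. pw mup mum x * (4 * r\<^sup>2 * (psi1 x)\<^sup>2 + (r\<^sup>2 * psi x + psi2 x)\<^sup>2))"
  proof (rule set_integral_mono)
    show "set_integrable lborel {-b..1} (\<lambda>x. min mup mum * (4 * r\<^sup>2 * (psi1 x)\<^sup>2))"
      using H2_triple_continuous_on_deriv[OF H]
      by (intro borel_integrable_atLeastAtMost' continuous_intros)
    show "set_integrable lborel {-b..1}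
        (\<lambda>x. pw mup mum x * (4 * r\<^sup>2 * (psi1 x)\<^sup>2 + (r\<^sup>2 * psi x + psi2 x)\<^sup>2))"
      by (rule H2_triple_set_integrable_viscous[OF H])
    fix x
    have "min mup mum * (4 * r\<^sup>2 * (psi1 x)\<^sup>2) \<le> pw mup mum x * (4 * r\<^sup>2 * (psi1 x)\<^sup>2)"
      by (intro mult_right_mono pw_bounds) simp
    also have "\<dots> \<le> pw mup mum x * (4 * r\<^sup>2 * (psi1 x)\<^sup>2 + (r\<^sup>2 * psi x + psi2 x)\<^sup>2)"
      using assms by (intro mult_left_mono) (auto simp: pw_def)
    finally show "min mup mum * (4 * r\<^sup>2 * (psi1 x)\<^sup>2)
        \<le> pw mup mum x * (4 * r\<^sup>2 * (psi1 x)\<^sup>2 + (r\<^sup>2 * psi x + psi2 x)\<^sup>2)" .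
  qed
  then show ?thesis unfolding viscous_energy_def by (simp add: mult.assoc)
qed

lemma viscous_energy_ge_on_admissible:
  assumes "(psi, psi1, psi2) \<in> admissible b rhop rhom r"
    and "0 < b" "0 < rhom" "rhom \<le> rhop" "0 < mup" "0 < mum"
  shows "4 * min mup mum * r\<^sup>2 / (rhop * (4 * r\<^sup>2 * (1 + b)\<^sup>2 + 1)) \<le> viscous_energy b mup mum psi psi1 psi2 r"
proof -
  define D where "D = rhop * (4 * r\<^sup>2 * (1 + b)\<^sup>2 + 1)"
  define I where "I = (LINT x:{-b..1}|lborel. (psi1 x)\<^sup>2)"
  have X: "in_X b psi psi1 psi2" and J: "functJ b rhop rhom psi psi1 r = 1"
    using assms(1) unfolding admissible_def by auto
  have "0 < D" unfolding D_def using assms by (simp add: add_nonneg_pos)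
  moreover have "2 \<le> D * I" using functJ_le_dirichlet[OF X assms(2-4), of r] J unfolding D_def I_def by simp
  ultimately have "2 / D \<le> I" by (simp add: divide_le_eq mult.commute)
  then have "2 * min mup mum * r\<^sup>2 * (2 / D) \<le> 2 * min mup mum * r\<^sup>2 * I"
    using assms by (intro mult_left_mono) auto
  then have "4 * min mup mum * r\<^sup>2 / D \<le> 2 * min mup mum * r\<^sup>2 * I" by simp
  also have "\<dots> \<le> viscous_energy b mup mum psi psi1 psi2 r"
    unfolding I_def using viscous_energy_ge_dirichlet[OF X] assms by simp
  finally show ?thesis unfolding D_def .
qed

lemma surface_energy_ge_on_admissible:
  assumes "(psi, psi1, psi2) \<in> admissible b rhop rhom r"
    and "0 < b" "0 < r" "0 < rhom" "rhom \<le> rhop" "0 \<le> g" "0 \<le> sigp" "0 \<le> sigm"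
  shows "- (g * (rhop - rhom) * r / rhom) \<le> surface_energy g rhop rhom sigp sigm psi r"
proof -
  have X: "in_X b psi psi1 psi2" and J: "functJ b rhop rhom psi psi1 r = 1"
    using assms(1) unfolding admissible_def by auto
  have "r * rhom * (psi 0)\<^sup>2 \<le> 2" using functJ_ge_trace[OF X assms(2-5)] J by simp
  have "1/2 * r\<^sup>2 * (g * (rhop - rhom)) * (psi 0)\<^sup>2
      = (g * (rhop - rhom) * r / rhom) * (r * rhom * (psi 0)\<^sup>2) / 2"
    using assms by (simp add: power2_eq_square field_simps)
  also have "\<dots> \<le> (g * (rhop - rhom) * r / rhom) * 2 / 2"
    using \<open>r * rhom * (psi 0)\<^sup>2 \<le> 2\<close> assms by (intro divide_right_mono mult_left_mono) auto
  finally have "1/2 * r\<^sup>2 * (g * (rhop - rhom)) * (psi 0)\<^sup>2 \<le> g * (rhop - rhom) * r / rhom"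
    by simp
  moreover have "0 \<le> 1/2 * r\<^sup>2 * (sigp * r\<^sup>2 + g * rhop) * (psi 1)\<^sup>2"
    "0 \<le> 1/2 * r\<^sup>2 * (sigm * r\<^sup>2) * (psi 0)\<^sup>2"
    using assms by auto
  ultimately show ?thesis unfolding surface_energy_def by (simp add: algebra_simps)
qed

lemma functJ_scale:
  "functJ b rhop rhom (\<lambda>x. l * psi x) (\<lambda>x. l * psi1 x) r = l\<^sup>2 * functJ b rhop rhom psi psi1 r"
proof -
  have scale: "pw rhop rhom x * (r\<^sup>2 * (l * psi x)\<^sup>2 + (l * psi1 x)\<^sup>2)
      = l\<^sup>2 * (pw rhop rhom x * (r\<^sup>2 * (psi x)\<^sup>2 + (psi1 x)\<^sup>2))" for x
    by (simp add: power_mult_distrib algebra_simps)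
  show ?thesis unfolding functJ_def scale by simp
qed

text \<open>The cubic profile vanishes to second order at the bottom and vanishes at the top,
  so only the (destabilising) interface term of the surface energy survives.\<close>
lemma admissible_vanishing_at_top:
  assumes "0 < b" "0 < r" "0 < rhom" "rhom \<le> rhop"
  shows "\<exists>psi psi1 psi2. (psi, psi1, psi2) \<in> admissible b rhop rhom r \<and> psi 1 = 0 \<and> psi 0 \<noteq> 0"
proof -
  define J1 where "J1 = functJ b rhop rhom (\<lambda>x. 1 * ((x + b)\<^sup>2 * (1 - x)))
    (\<lambda>x. 1 * (2 * (x + b) * (1 - x) - (x + b)\<^sup>2)) r"
  have "r * rhom * (b\<^sup>2)\<^sup>2 \<le> 2 * J1"
    using functJ_ge_trace[OF cubic_in_X[OF \<open>0 < b\<close>, of 1]] assms unfolding J1_def by simp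
  moreover have "0 < r * rhom * (b\<^sup>2)\<^sup>2" using assms by simp
  ultimately have "0 < J1" by linarith
  define l where "l = 1 / sqrt J1"
  have "functJ b rhop rhom (\<lambda>x. l * ((x + b)\<^sup>2 * (1 - x))) (\<lambda>x. l * (2 * (x + b) * (1 - x) - (x + b)\<^sup>2)) r = 1"
    using functJ_scale[of b rhop rhom l "\<lambda>x. 1 * ((x + b)\<^sup>2 * (1 - x))"] \<open>0 < J1\<close>
    unfolding J1_def l_def by (simp add: power_divide)
  moreover have "l * ((0 + b)\<^sup>2 * (1 - 0)) \<noteq> 0" using \<open>0 < J1\<close> \<open>0 < b\<close> unfolding l_def by simp
  ultimately show ?thesis
    using cubic_in_X[OF \<open>0 < b\<close>, of l] unfolding admissible_def by fastforce
qed

lemma below_xi_crit: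
  assumes "ereal r < xi_crit g rhop rhom sigm" "0 < r" "0 \<le> sigm" "rhom < rhop" "0 < g"
  shows "sigm * r\<^sup>2 < g * (rhop - rhom)"
proof (cases "0 < sigm")
  case True
  then have "r < sqrt (g * (rhop - rhom) / sigm)" using assms(1) by (simp add: xi_crit_def)
  then have "r\<^sup>2 < (sqrt (g * (rhop - rhom) / sigm))\<^sup>2"
    using assms by (intro power_strict_mono) auto
  also have "\<dots> = g * (rhop - rhom) / sigm" using True assms by simp
  finally show ?thesis using True by (simp add: field_simps)
qed (use assms in simp)

lemma admissible_surface_energy_neg:
  assumes "0 < b" "0 < r" "0 < rhom" "rhom < rhop" "0 < g" "0 \<le> sigm"
    and "ereal r < xi_crit g rhop rhom sigm"
  shows "\<exists>psi psi1 psi2. (psi, psi1, psi2) \<in> admissible b rhop rhom r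
    \<and> surface_energy g rhop rhom sigp sigm psi r < 0"
proof -
  obtain psi psi1 psi2 where adm: "(psi, psi1, psi2) \<in> admissible b rhop rhom r"
    and "psi 1 = 0" "psi 0 \<noteq> 0"
    using admissible_vanishing_at_top[of b r rhom rhop] assms by auto
  have "surface_energy g rhop rhom sigp sigm psi r
      = (1/2 * r\<^sup>2 * (psi 0)\<^sup>2) * (sigm * r\<^sup>2 - g * (rhop - rhom))"
    using \<open>psi 1 = 0\<close> by (simp add: surface_energy_def)
  also have "\<dots> < 0"
    using \<open>psi 0 \<noteq> 0\<close> below_xi_crit[OF assms(7,2,6,4,5)] assms by (intro mult_pos_neg) auto
  finally show ?thesis using adm by blast
qed

lemma affine_family_admissible:
  assumes "0 < b" "0 < r" "0 < rhom" "rhom \<le> rhop" "0 < mup" "0 < mum" "0 \<le> g" "0 \<le> sigp" "0 \<le> sigm"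
  shows "affine_family (admissible b rhop rhom r)
    (\<lambda>(psi, psi1, psi2). viscous_energy b mup mum psi psi1 psi2 r)
    (\<lambda>(psi, psi1, psi2). surface_energy g rhop rhom sigp sigm psi r)
    (4 * min mup mum * r\<^sup>2 / (rhop * (4 * r\<^sup>2 * (1 + b)\<^sup>2 + 1))) (g * (rhop - rhom) * r / rhom)"
proof
  show "admissible b rhop rhom r \<noteq> {}" using admissible_vanishing_at_top[OF assms(1-4)] by blast
  fix i assume "i \<in> admissible b rhop rhom r"
  moreover obtain psi psi1 psi2 where i_eq: "i = (psi, psi1, psi2)" by (rule prod_cases3)
  ultimately have i: "(psi, psi1, psi2) \<in> admissible b rhop rhom r" by simp
  show "4 * min mup mum * r\<^sup>2 / (rhop * (4 * r\<^sup>2 * (1 + b)\<^sup>2 + 1))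
      \<le> (\<lambda>(psi, psi1, psi2). viscous_energy b mup mum psi psi1 psi2 r) i"
    using viscous_energy_ge_on_admissible[OF i assms(1,3-6)] unfolding i_eq by simp
  show "- (g * (rhop - rhom) * r / rhom) \<le> (\<lambda>(psi, psi1, psi2). surface_energy g rhop rhom sigp sigm psi r) i"
    using surface_energy_ge_on_admissible[OF i assms(1-4,7-9)] unfolding i_eq by simp
next
  have "0 < rhop * (4 * r\<^sup>2 * (1 + b)\<^sup>2 + 1)" using assms by (simp add: add_nonneg_pos)
  then show "0 < 4 * min mup mum * r\<^sup>2 / (rhop * (4 * r\<^sup>2 * (1 + b)\<^sup>2 + 1))" using assms by simp
qed

theorem lemma2p1:
  fixes b g rhop rhom mup mum sigp sigm r :: real
  assumes "b > 0" and "g > 0"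
    and "rhop > rhom" and "rhom > 0"
    and "mup > 0" and "mum > 0"
    and "sigp \<ge> 0" and "sigm \<ge> 0"
    and "(sigp = 0 \<and> sigm = 0) \<or> (sigp > 0 \<and> sigm > 0)"
    and "r > 0" and "ereal r < xi_crit g rhop rhom sigm"
  shows "(\<forall>a c. 0 < a \<and> a \<le> c \<longrightarrow>
            (\<exists>L. L-lipschitz_on {a..c} (alpha b g rhop rhom mup mum sigp sigm r)))
       \<and> continuous_on {0<..} (alpha b g rhop rhom mup mum sigp sigm r)
       \<and> strict_mono_on {0<..} (alpha b g rhop rhom mup mum sigp sigm r)
       \<and> (\<exists>C0 C1 C2. C0 > 0 \<and> C1 > 0 \<and> C2 > 0 \<and>
            (\<forall>s>0. alpha b g rhop rhom mup mum sigp sigm r s \<le> - C0 + s * C1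
                 \<and> alpha b g rhop rhom mup mum sigp sigm r s
                     \<ge> - (2 * g * (rhop - rhom) / rhom) * r + s * C2))"
proof -
  let ?A = "\<lambda>(psi, psi1, psi2). viscous_energy b mup mum psi psi1 psi2 r"
  let ?N = "\<lambda>(psi, psi1, psi2). surface_energy g rhop rhom sigp sigm psi r"
  let ?c = "4 * min mup mum * r\<^sup>2 / (rhop * (4 * r\<^sup>2 * (1 + b)\<^sup>2 + 1))"
  let ?K = "g * (rhop - rhom) * r / rhom"
  have pos: "0 < b" "0 < r" "0 < rhom" "rhom \<le> rhop" "0 < mup" "0 < mum" "0 \<le> g" "0 \<le> sigp" "0 \<le> sigm"
    using assms(1-8,10) by linarith+
  interpret affine_family "admissible b rhop rhom r" ?A ?N ?c ?K
    by (rule affine_family_admissible[OF pos])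
  obtain psi psi1 psi2 where p: "(psi, psi1, psi2) \<in> admissible b rhop rhom r"
    and neg: "surface_energy g rhop rhom sigp sigm psi r < 0"
    using admissible_surface_energy_neg[of b r rhom rhop g sigm sigp] assms by auto
  let ?E = "lower_envelope (admissible b rhop rhom r) ?A ?N"
  have "- (2 * g * (rhop - rhom) / rhom) * r \<le> - ?K" using assms by (simp add: field_simps)
  then have lower: "- (2 * g * (rhop - rhom) / rhom) * r + s * ?c \<le> ?E s" if "0 < s" for s
    using lower_envelope_ge[of s] that by linarith
  have upper: "?E s \<le> - (- ?N (psi, psi1, psi2)) + s * ?A (psi, psi1, psi2)" if "0 < s" for s
    using lower_envelope_le[OF _ p, of s] that by simp
  show ?thesis
    unfolding alpha_eq_lower_envelope
  proof (intro conjI)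
    show "\<forall>a d. 0 < a \<and> a \<le> d \<longrightarrow> (\<exists>L. L-lipschitz_on {a..d} ?E)"
      using lipschitz_on_lower_envelope by blast
    show "strict_mono_on {0<..} ?E"
      by (rule monotone_on_subset[OF strict_mono_on_lower_envelope]) auto
    show "\<exists>C0 C1 C2. C0 > 0 \<and> C1 > 0 \<and> C2 > 0 \<and>
        (\<forall>s>0. ?E s \<le> - C0 + s * C1 \<and> ?E s \<ge> - (2 * g * (rhop - rhom) / rhom) * r + s * C2)"
    proof (intro exI conjI allI impI)
      show "0 < - ?N (psi, psi1, psi2)" "0 < ?A (psi, psi1, psi2)" "0 < ?c"
        using neg slope_pos slope_ge[OF p] by auto
    qed (use upper lower in auto)
  qed (rule continuous_on_lower_envelope)
qed

end
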